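(* Let $n$ be even, $k\ge 1$ an integer, $d=\gcd(k,n)$, $n=td$, $\lambda\in\mathbb{F}_{2^n}$, and $f(x)=Tr(\lambda x^{2^k+1})$ for $x\in\mathbb{F}_{2^n}$. Then $f$ is bent-negabent if and only if one of the following two equivalent statements holds: (1) $\lambda^{2^{n-k}}x^{2^{n-k}}+\lambda x^{2^k}$ is a complete mapping polynomial over $\mathbb{F}_{2^n}$; (2) $\lambda$ is neither of the form $\frac{v_0^{2^{2k}+1}}{(v_0+v_1)^{2^k+1}}$ with $v_0\in\mathbb{F}_{2^n}\setminus\mathbb{F}_{2^d}$ and $v_1=v_0^{2^k}$, nor of the form $v^{2^k+1}$ with $v\in\mathbb{F}_{2^n}$.
   Context: $Tr=Tr_1^n$ is the absolute trace $\mathbb{F}_{2^n}\to\mathbb{F}_2$. A polynomial $F$ over $\mathbb{F}_{2^n}$ is a complete mapping polynomial if both $F(x)$ and $F(x)+x$ are permutation polynomials of $\mathbb{F}_{2^n}$. Fix a self-dual basis of $\mathbb{F}_{2^n}$ over $\mathbb{F}_2$ (basis $\{\alpha_i\}$ with $Tr(\alpha_i\alpha_j)=\delta_{ij}$), identify $\mathbb{F}_{2^n}$ with $\mathbb{F}_2^n$ via coordinates, and let $wt(x)$ be the number of nonzero coordinates of $x$. For $g:\mathbb{F}_{2^n}\to\mathbb{F}_2$: $g$ is bent if $\left|\sum_x(-1)^{g(x)+Tr(\mu x)}\right|=2^{n/2}$ for all $\mu$; $g$ is negabent if $\left|\sum_x(-1)^{g(x)+Tr(\mu x)}\mathrm{i}^{wt(x)}\right|=2^{n/2}$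 for all $\mu$ ($\mathrm{i}=\sqrt{-1}$); $g$ is bent-negabent if it is both. *)

theory Defs
  imports Complex_Main
begin

(* The field F_{2^n} is modelled by a finite field type 'a with CARD('a) = 2^n and 2 = 0. *)

definition tr :: "nat \<Rightarrow> 'a::field \<Rightarrow> 'a" where
  "tr n x = (\<Sum>i<n. x ^ (2 ^ i))"

definition sgn2 :: "'a::field \<Rightarrow> complex" where
  "sgn2 b = (if b = 0 then 1 else -1)"

definition self_dual_basis :: "nat \<Rightarrow> (nat \<Rightarrow> 'a::field) \<Rightarrow> bool" where
  "self_dual_basis n \<alpha> \<longleftrightarrow>
     (\<forall>i<n. \<forall>j<n. tr n (\<alpha> i * \<alpha> j) = (if i = j then 1 else 0))"

text \<open>Hamming weight of x w.r.t. the self-dual basis: the i-th coordinate of x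
  in a self-dual basis is Tr(alpha_i x).\<close>
definition wt :: "nat \<Rightarrow> (nat \<Rightarrow> 'a::field) \<Rightarrow> 'a \<Rightarrow> nat" where
  "wt n \<alpha> x = card {i. i < n \<and> tr n (\<alpha> i * x) \<noteq> 0}"

text \<open>Boolean functions g : F_{2^n} -> F_2 are represented as maps into 'a with values in {0,1}.\<close>
definition bent :: "nat \<Rightarrow> ('a::{field,finite} \<Rightarrow> 'a) \<Rightarrow> bool" where
  "bent n g \<longleftrightarrow>
     (\<forall>\<mu>. cmod (\<Sum>x\<in>UNIV. sgn2 (g x + tr n (\<mu> * x))) = sqrt (2 ^ n))"

definition negabent :: "nat \<Rightarrow> (nat \<Rightarrow> 'a::{field,finite}) \<Rightarrow> ('a \<Rightarrow> 'a) \<Rightarrow> bool" where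
  "negabent n \<alpha> g \<longleftrightarrow>
     (\<forall>\<mu>. cmod (\<Sum>x\<in>UNIV. sgn2 (g x + tr n (\<mu> * x)) * \<i> ^ (wt n \<alpha> x)) = sqrt (2 ^ n))"

definition bent_negabent :: "nat \<Rightarrow> (nat \<Rightarrow> 'a::{field,finite}) \<Rightarrow> ('a \<Rightarrow> 'a) \<Rightarrow> bool" where
  "bent_negabent n \<alpha> g \<longleftrightarrow> bent n g \<and> negabent n \<alpha> g"

definition complete_mapping :: "('a::field \<Rightarrow> 'a) \<Rightarrow> bool" where
  "complete_mapping F \<longleftrightarrow> bij F \<and> bij (\<lambda>x. F x + x)"

end

theory Submission imports Defs begin

(* Write Q x = Tr(lam x^(2^k+1)) and L x = lam^(2^(n-k)) x^(2^(n-k)) + lam x^(2^k), so that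
   Q(y+a) + Q(y) + Q(a) = Tr(y L(a)).  Expanding |W(mu)|^2 as a double sum and substituting
   x = y + a turns it into 2^n times a sum over the kernel of L; in the negabent transform the weight
   i^wt(x) contributes the extra character (-1)^Tr(a y), which replaces L by L + id.  Hence f is bent
   iff L is injective and negabent iff L + id is, i.e. iff L is a complete mapping.  Finally, raising
   L x = 0 resp. L x + x = 0 to the power 2^k and multiplying by x^(2^k) gives u + u^(2^k) = 0
   resp. u + u^(2^k) = x^(2^(k+1)) for u = lam x^(2^k+1); solving these for lam gives the two
   excluded forms of lam. *)

definition walsh :: "nat \<Rightarrow> ('a::{field,finite} \<Rightarrow> complex) \<Rightarrow> ('a \<Rightarrow> 'a) \<Rightarrow> 'a \<Rightarrow> complex" where
  "walsh n \<psi> g \<mu> = (\<Sum>x\<in>UNIV. sgn2 (g x + tr n (\<mu> * x)) * \<psi> x)"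

definition coord_supp :: "nat \<Rightarrow> (nat \<Rightarrow> 'a::field) \<Rightarrow> 'a \<Rightarrow> nat set" where
  "coord_supp n \<alpha> x = {j. j < n \<and> tr n (\<alpha> j * x) \<noteq> 0}"

definition polar :: "nat \<Rightarrow> nat \<Rightarrow> 'a::field \<Rightarrow> 'a \<Rightarrow> 'a" where
  "polar n k lam x = lam ^ (2 ^ (n - k mod n)) * x ^ (2 ^ (n - k mod n)) + lam * x ^ (2 ^ k)"

lemma bent_iff_walsh: "bent n g \<longleftrightarrow> (\<forall>\<mu>. cmod (walsh n (\<lambda>_. 1) g \<mu>) = sqrt (2 ^ n))"
  by (simp add: bent_def walsh_def)

lemma negabent_iff_walsh:
  "negabent n \<alpha> g \<longleftrightarrow> (\<forall>\<mu>. cmod (walsh n (\<lambda>x. \<i> ^ wt n \<alpha> x) g \<mu>) = sqrt (2 ^ n))"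
  by (simp add: negabent_def walsh_def)

lemma cmod_eq_sqrt_iff: "cmod z = sqrt r \<longleftrightarrow> z * cnj z = complex_of_real r" if "r \<ge> 0"
proof -
  have "cmod z = sqrt r \<longleftrightarrow> (cmod z)\<^sup>2 = r"
    using that real_sqrt_unique[of "cmod z" r] by auto
  also have "\<dots> \<longleftrightarrow> z * cnj z = complex_of_real r"
    unfolding complex_norm_square[symmetric] of_real_eq_iff ..
  finally show ?thesis .
qed

lemma power_two_power_add: "(x::'a::monoid_mult) ^ (2 ^ (a + b)) = (x ^ (2 ^ a)) ^ (2 ^ b)"
  by (simp add: power_add power_mult)

lemma inj_additive_iff:
  fixes G :: "'a::ab_group_add \<Rightarrow> 'b::ab_group_add"
  assumes add: "\<And>x y. G (x + y) = G x + G y"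
  shows "inj G \<longleftrightarrow> (\<forall>a. G a = 0 \<longrightarrow> a = 0)"
proof
  have G_diff: "G (x - y) = G x - G y" for x y
    using add[of "x - y" y] by (simp add: algebra_simps)
  show "inj G \<Longrightarrow> \<forall>a. G a = 0 \<longrightarrow> a = 0"
    using G_diff[of 0 0] by (metis diff_self injD)
  show "inj G" if triv: "\<forall>a. G a = 0 \<longrightarrow> a = 0"
  proof (rule injI)
    fix x y assume "G x = G y"
    hence "G (x - y) = 0" by (simp add: G_diff)
    hence "x - y = 0" using triv by blast
    thus "x = y" by simp
  qed
qed

section \<open>Finite fields of characteristic two\<close>

context
  fixes n :: nat
  assumes card: "card (UNIV :: 'a::{field,finite} set) = 2 ^ n"
    and char2: "(2::'a) = 0"
begin

lemma add_self_eq_0 [simp]: "(x::'a) + x = 0"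
  using char2 mult_2[of x] by simp

lemma add_eq_0_iff_eq: "(x::'a) + y = 0 \<longleftrightarrow> x = y"
proof -
  have "x + y = 0 \<longleftrightarrow> x + y = y + y" by simp
  thus ?thesis by (simp only: add_right_cancel)
qed

lemma frobenius_add: "((x::'a) + y) ^ (2 ^ i) = x ^ (2 ^ i) + y ^ (2 ^ i)"
proof (induction i)
  case (Suc i)
  have sq: "(u + v) ^ 2 = u ^ 2 + v ^ 2" for u v :: 'a
    using char2 by (simp add: power2_eq_square algebra_simps)
  have "(x + y) ^ (2 ^ Suc i) = ((x + y) ^ (2 ^ i)) ^ 2"
    by (simp add: power_mult[symmetric] mult.commute)
  also have "\<dots> = (x ^ (2 ^ i)) ^ 2 + (y ^ (2 ^ i)) ^ 2"
    using Suc by (simp add: sq)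
  also have "\<dots> = x ^ (2 ^ Suc i) + y ^ (2 ^ Suc i)"
    by (simp add: power_mult[symmetric] mult.commute)
  finally show ?case .
qed simp

lemma frobenius_sum: "finite A \<Longrightarrow> (\<Sum>j\<in>A. g j :: 'a) ^ (2 ^ i) = (\<Sum>j\<in>A. g j ^ (2 ^ i))"
  by (induction A rule: finite_induct) (auto simp: frobenius_add)

lemma frobenius_eq_iff [simp]: "(x::'a) ^ (2 ^ i) = y ^ (2 ^ i) \<longleftrightarrow> x = y"
proof
  assume "x ^ (2 ^ i) = y ^ (2 ^ i)"
  hence "(x + y) ^ (2 ^ i) = 0" by (simp add: frobenius_add)
  thus "x = y" by (simp add: add_eq_0_iff_eq)
qed simp

lemma card_exponent_pos: "n > 0"
proof (rule ccontr)
  assume "\<not> n > 0"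
  hence "card (UNIV :: 'a set) = 1" using card by simp
  moreover have "card {0::'a, 1} \<le> card (UNIV :: 'a set)" by (rule card_mono) auto
  ultimately show False by simp
qed

lemma pow_card_eq_self: "(x::'a) ^ (2 ^ n) = x"
proof (cases "x = 0")
  case False
  let ?U = "UNIV - {0::'a}"
  have "bij_betw ((*) x) ?U ?U"
    using False by (intro bij_betw_byWitness[where f'="\<lambda>y. y / x"]) auto
  hence "(\<Prod>y\<in>?U. x * y) = (\<Prod>y\<in>?U. y)"
    by (rule prod.reindex_bij_betw)
  moreover have "(\<Prod>y\<in>?U. y) \<noteq> 0" by simp
  ultimately have "x ^ card ?U = 1" by (simp add: prod.distrib)
  moreover have "card ?U = 2 ^ n - 1" using card by (simp add: card_Diff_singleton)
  ultimately have "x ^ (2 ^ n - 1) * x = x" by simp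
  thus ?thesis by (simp only: power_minus_mult[OF zero_less_power[OF zero_less_numeral]])
qed simp

lemma frobenius_fixed_mult: "(w::'a) ^ (2 ^ a) = w \<Longrightarrow> w ^ (2 ^ (j * a)) = w"
  by (induction j) (simp_all add: power_add power_mult)

lemma pow_mult_card_eq_self: "(x::'a) ^ (2 ^ (m * n)) = x"
  by (rule frobenius_fixed_mult[OF pow_card_eq_self])

lemma frobenius_fixed_gcd:
  assumes "k \<noteq> 0" and w: "(w::'a) ^ (2 ^ k) = w"
  shows "w ^ (2 ^ gcd k n) = w"
proof -
  obtain x y where b: "k * x = n * y + gcd k n" using bezout_nat[OF \<open>k \<noteq> 0\<close>] by blast
  have "w = w ^ (2 ^ (y * n + gcd k n))"
    using frobenius_fixed_mult[OF w, of x] b by (simp add: mult.commute)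
  also have "\<dots> = (w ^ (2 ^ (y * n))) ^ (2 ^ gcd k n)"
    by (rule power_two_power_add)
  finally show ?thesis by (simp add: pow_mult_card_eq_self)
qed

lemma frobenius_fixed_dvd: "d dvd k \<Longrightarrow> (w::'a) ^ (2 ^ d) = w \<Longrightarrow> w ^ (2 ^ k) = w"
  by (auto elim!: dvdE simp: mult.commute[of d] frobenius_fixed_mult)

lemma frobenius_root_exists: "\<exists>w::'a. w ^ (2 ^ j) = u"
proof
  have "j * n - j + j = j * n"
    using card_exponent_pos by (simp add: le_add_diff_inverse2)
  thus "(u ^ (2 ^ (j * n - j))) ^ (2 ^ j) = u"
    unfolding power_two_power_add[symmetric] by (simp add: pow_mult_card_eq_self)
qed

text \<open>The Frobenius powers with exponents 2 ^ k and 2 ^ (n - k mod n) are mutually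
  inverse, as n - k mod n + k is a multiple of n.\<close>

lemma add_exponent_inverse: "n - k mod n + k = (k div n + 1) * n"
proof -
  have "k mod n \<le> n"
    using card_exponent_pos by (simp add: less_imp_le)
  thus ?thesis
    unfolding distrib_right mult_1 using div_mult_mod_eq[of k n] by linarith
qed

lemma frobenius_inverse: "((x::'a) ^ (2 ^ (n - k mod n))) ^ (2 ^ k) = x"
  unfolding power_two_power_add[symmetric] add_exponent_inverse by (rule pow_mult_card_eq_self)

lemma tr_add: "tr n ((x::'a) + y) = tr n x + tr n y"
  by (simp add: tr_def frobenius_add sum.distrib)

lemma tr_zero [simp]: "tr n (0::'a) = 0"
  by (simp add: tr_def power_0_left)

lemma tr_sum: "finite S \<Longrightarrow> tr n (\<Sum>j\<in>S. g j :: 'a) = (\<Sum>j\<in>S. tr n (g j))"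
  by (induction S rule: finite_induct) (auto simp: tr_add)

lemma tr_square: "tr n ((x::'a) ^ 2) = tr n x"
proof -
  have "tr n (x ^ 2) = (\<Sum>i<n. x ^ (2 ^ Suc i))"
    unfolding tr_def by (simp add: power_mult[symmetric] mult.commute)
  also have "\<dots> = (\<Sum>i<Suc n. x ^ (2 ^ i)) - x ^ (2 ^ 0)"
    by (simp only: sum.lessThan_Suc_shift) simp
  also have "\<dots> = tr n x"
    by (simp add: tr_def pow_card_eq_self)
  finally show ?thesis .
qed

lemma tr_frobenius [simp]: "tr n ((x::'a) ^ (2 ^ j)) = tr n x"
  by (induction j arbitrary: x) (simp_all add: power_mult tr_square)

lemma tr_eq_0_or_1: "tr n (x::'a) = 0 \<or> tr n x = 1"
proof -
  have "tr n x ^ 2 = tr n (x ^ 2)"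
    using frobenius_sum[of "{..<n}" "\<lambda>i. x ^ (2 ^ i)" 1]
    by (simp add: tr_def power_mult[symmetric] mult.commute)
  hence "tr n x ^ 2 = tr n x"
    by (simp only: tr_square)
  hence "tr n x * (tr n x - 1) = 0"
    by (simp add: power2_eq_square algebra_simps)
  thus ?thesis by simp
qed

lemma sgn2_tr_add: "sgn2 (tr n ((a::'a) + b)) = sgn2 (tr n a) * sgn2 (tr n b)"
  using tr_eq_0_or_1[of a] tr_eq_0_or_1[of b] add_self_eq_0[of 1] by (auto simp: tr_add sgn2_def)

lemma sgn2_of_nat: "sgn2 (of_nat m :: 'a) = (-1) ^ m"
proof -
  have "(of_nat m :: 'a) = (if even m then 0 else 1)"
    by (induction m) auto
  thus ?thesis by (simp add: sgn2_def)
qed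

lemma cnj_sgn2 [simp]: "cnj (sgn2 t) = sgn2 t"
  by (simp add: sgn2_def)

lemma sgn2_nonzero [simp]: "sgn2 t \<noteq> 0"
  by (simp add: sgn2_def)

lemma sum_shift: "(\<Sum>y\<in>UNIV. g (y + c)) = (\<Sum>y\<in>UNIV. g (y::'a))"
  by (rule sum.reindex_bij_betw[OF bij_plus_right])

text \<open>Orthogonality of additive characters.  Instead of showing that the trace is not identically
  zero, we assume a witness z; a self-dual basis provides one.\<close>

lemma sum_sgn2_tr_mult:
  assumes "tr n (z::'a) \<noteq> 0"
  shows "(\<Sum>y\<in>UNIV. sgn2 (tr n ((b::'a) * y))) = (if b = 0 then 2 ^ n else 0)"
proof (cases "b = 0")
  case True
  then show ?thesis using card by (simp add: sgn2_def)
next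
  case False
  let ?S = "\<Sum>y\<in>UNIV. sgn2 (tr n (b * y))"
  have "?S = (\<Sum>y\<in>UNIV. sgn2 (tr n (b * (y + z / b))))"
    by (rule sum_shift[symmetric])
  also have "\<dots> = - ?S"
  proof -
    have "sgn2 (tr n z) = -1"
      using tr_eq_0_or_1[of z] assms by (simp add: sgn2_def)
    thus ?thesis
      using False by (simp add: distrib_left sgn2_tr_add sum_negf)
  qed
  finally show ?thesis using False by simp
qed

section \<open>Coordinates in a self-dual basis\<close>

lemma coord_supp_add:
  "coord_supp n \<alpha> (x + y) = (coord_supp n \<alpha> x - coord_supp n \<alpha> y) \<union> (coord_supp n \<alpha> y - coord_supp n \<alpha> (x::'a))"
proof -
  have "tr n (\<alpha> j * (x + y)) \<noteq> 0 \<longleftrightarrow> (tr n (\<alpha> j * x) \<noteq> 0) \<noteq> (tr n (\<alpha> j * y) \<noteq> 0)" for j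
    using tr_eq_0_or_1[of "\<alpha> j * x"] tr_eq_0_or_1[of "\<alpha> j * y"] add_self_eq_0[of 1]
    by (auto simp: distrib_left tr_add)
  thus ?thesis unfolding coord_supp_def by blast
qed

context
  fixes \<alpha> :: "nat \<Rightarrow> 'a"
  assumes sd: "self_dual_basis n \<alpha>"
begin

lemma self_dual_tr_nonzero: "tr n (\<alpha> 0 * \<alpha> 0) \<noteq> 0"
  using sd card_exponent_pos unfolding self_dual_basis_def by auto

lemma self_dual_expansion: "x = (\<Sum>j<n. tr n (\<alpha> j * x) * \<alpha> j)"
proof -
  define E where "E S = (\<Sum>j\<in>S. \<alpha> j)" for S
  have tr_E: "tr n (\<alpha> i * E S) = (if i \<in> S then 1 else 0)" if "S \<subseteq> {..<n}" "i < n" for S i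
  proof -
    have fin: "finite S" using that(1) finite_subset by blast
    hence "tr n (\<alpha> i * E S) = (\<Sum>j\<in>S. tr n (\<alpha> i * \<alpha> j))"
      unfolding E_def sum_distrib_left by (rule tr_sum)
    also have "\<dots> = (\<Sum>j\<in>S. if i = j then 1 else 0)"
      using sd that unfolding self_dual_basis_def by (intro sum.cong) auto
    finally show ?thesis using fin by auto
  qed
  have "inj_on E (Pow {..<n})"
  proof
    fix S T assume "S \<in> Pow {..<n}" "T \<in> Pow {..<n}" "E S = E T"
    then have "i \<in> S \<longleftrightarrow> i \<in> T" if "i < n" for i
      using tr_E[of S i] tr_E[of T i] that by (auto split: if_splits)
    thus "S = T" using \<open>S \<in> Pow {..<n}\<close> \<open>T \<in> Pow {..<n}\<close> by auto
  qed
  hence "card (E ` Pow {..<n}) = card (UNIV :: 'a set)"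
    using card by (simp add: card_image card_Pow)
  hence "E ` Pow {..<n} = UNIV"
    by (metis card_eq_UNIV_imp_eq_UNIV finite)
  then obtain S where S: "S \<subseteq> {..<n}" and x: "x = E S" by blast
  have "(\<Sum>j<n. tr n (\<alpha> j * x) * \<alpha> j) = (\<Sum>j<n. if j \<in> S then \<alpha> j else 0)"
    using x S tr_E by (intro sum.cong) auto
  also have "\<dots> = (\<Sum>j\<in>{..<n} \<inter> S. \<alpha> j)"
    by (simp add: sum.If_cases)
  also have "{..<n} \<inter> S = S" using S by auto
  finally show ?thesis by (simp add: x E_def)
qed

lemma tr_mult_eq_card_coord_supp: "tr n (a * b) = of_nat (card (coord_supp n \<alpha> a \<inter> coord_supp n \<alpha> b))"
proof -
  have "tr n (a * b) = (\<Sum>j<n. tr n (tr n (\<alpha> j * a) * (\<alpha> j * b)))"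
    by (subst self_dual_expansion[of a]) (simp add: sum_distrib_right mult.assoc tr_sum)
  also have "\<dots> = (\<Sum>j<n. if j \<in> coord_supp n \<alpha> a \<inter> coord_supp n \<alpha> b then 1 else 0)"
  proof (intro sum.cong refl)
    fix j
    show "tr n (tr n (\<alpha> j * a) * (\<alpha> j * b)) = (if j \<in> coord_supp n \<alpha> a \<inter> coord_supp n \<alpha> b then 1 else 0)"
      if "j \<in> {..<n}"
      using that tr_eq_0_or_1[of "\<alpha> j * a"] tr_eq_0_or_1[of "\<alpha> j * b"] unfolding coord_supp_def by auto
  qed
  also have "\<dots> = (\<Sum>j\<in>{..<n} \<inter> (coord_supp n \<alpha> a \<inter> coord_supp n \<alpha> b). 1)"
    by (rule sum.inter_restrict[symmetric]) simp
  also have "\<dots> = of_nat (card ({..<n} \<inter> (coord_supp n \<alpha> a \<inter> coord_supp n \<alpha> b)))"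
    by simp
  also have "{..<n} \<inter> (coord_supp n \<alpha> a \<inter> coord_supp n \<alpha> b) = coord_supp n \<alpha> a \<inter> coord_supp n \<alpha> b"
    by (auto simp: coord_supp_def)
  finally show ?thesis .
qed

text \<open>The negabent twist \<i> ^ wt is a quadratic character up to the factor (-1) ^ Tr(a y):
  with p, r, m the sizes of A - Y, Y - A, A \<inter> Y
  for the coordinate supports A, Y of a, y, this is
  \<i>^(p+r) (-\<i>)^(m+r) = \<i>^(p+m) (-1)^m.\<close>

lemma i_pow_wt_add:
  "\<i> ^ wt n \<alpha> (y + a) * cnj (\<i> ^ wt n \<alpha> y) = \<i> ^ wt n \<alpha> a * sgn2 (tr n (a * y))"
proof -
  define A Y where "A = coord_supp n \<alpha> a" and "Y = coord_supp n \<alpha> y"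
  have fin: "finite A" "finite Y" by (simp_all add: A_def Y_def coord_supp_def)
  define p r m where "p = card (A - Y)" and "r = card (Y - A)" and "m = card (A \<inter> Y)"
  have wt: "wt n \<alpha> x = card (coord_supp n \<alpha> x)" for x
    by (simp add: wt_def coord_supp_def)
  have "wt n \<alpha> (y + a) = card ((Y - A) \<union> (A - Y))"
    unfolding wt coord_supp_add A_def Y_def ..
  also have "\<dots> = r + p"
    unfolding p_def r_def using fin by (subst card_Un_disjoint) auto
  finally have wt_ya: "wt n \<alpha> (y + a) = p + r" by simp
  have "wt n \<alpha> y = card ((A \<inter> Y) \<union> (Y - A))"
    unfolding wt Y_def[symmetric] by (rule arg_cong[where f=card]) auto
  also have "\<dots> = m + r"
    unfolding m_def r_def using fin by (subst card_Un_disjoint) auto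
  finally have wt_y: "wt n \<alpha> y = m + r" .
  have "wt n \<alpha> a = card ((A - Y) \<union> (A \<inter> Y))"
    unfolding wt A_def[symmetric] by (rule arg_cong[where f=card]) auto
  also have "\<dots> = p + m"
    unfolding m_def p_def using fin by (subst card_Un_disjoint) auto
  finally have wt_a: "wt n \<alpha> a = p + m" .
  have sgn: "sgn2 (tr n (a * y)) = (-1) ^ m"
    unfolding m_def A_def Y_def by (simp add: tr_mult_eq_card_coord_supp sgn2_of_nat)
  have "\<i> ^ (p + r) * (- \<i>) ^ (m + r) = \<i> ^ p * (- \<i>) ^ m * (\<i> * - \<i>) ^ r"
    by (simp only: power_add power_mult_distrib mult_ac)
  also have "\<dots> = \<i> ^ (p + m) * (-1) ^ m"
  proof -
    have "(- \<i>) ^ m = \<i> ^ m * (-1) ^ m" by (simp add: power_mult_distrib[symmetric])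
    thus ?thesis by (simp add: power_add)
  qed
  finally show ?thesis
    by (simp add: wt_ya wt_y wt_a sgn)
qed

end

section \<open>Walsh transforms of quadratic forms\<close>

text \<open>A quadratic form tr n (q x) with polar map L, twisted by a weight \<psi> whose
  failure to be additive is the bilinear character (-1) ^ tr n (c a y).  The plain and the
  nega-Walsh transform are the cases \<psi> = 1, c = 0 and \<psi> = \<i> ^ wt, c = 1.\<close>

context
  fixes q L :: "'a \<Rightarrow> 'a" and \<psi> :: "'a \<Rightarrow> complex" and c z :: 'a
  assumes polar: "\<And>y a. tr n (q (y + a)) + tr n (q y) = tr n (q a) + tr n (y * L a)"
    and L_0: "L 0 = 0"
    and twist: "\<And>y a. \<psi> (y + a) * cnj (\<psi> y) = \<psi> a * sgn2 (tr n (c * a * y))"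
    and \<psi>_0: "\<psi> 0 = 1"
    and \<psi>_nonzero: "\<And>a. \<psi> a \<noteq> 0"
    and tr_z: "tr n z \<noteq> 0"
begin

lemma walsh_mult_cnj:
  "walsh n \<psi> (\<lambda>x. tr n (q x)) \<mu> * cnj (walsh n \<psi> (\<lambda>x. tr n (q x)) \<mu>)
   = 2 ^ n * (\<Sum>a | L a + c * a = 0. \<psi> a * sgn2 (tr n (q a + \<mu> * a)))"
proof -
  define A where "A x = sgn2 (tr n (q x + \<mu> * x)) * \<psi> x" for x
  have pair: "A (y + a) * cnj (A y) = \<psi> a * sgn2 (tr n (q a + \<mu> * a)) * sgn2 (tr n ((L a + c * a) * y))"
    for y a
  proof -
    let ?P = "q (y + a) + \<mu> * (y + a)" and ?Q = "q y + \<mu> * y" and ?R = "q a + \<mu> * a"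
    have "tr n (?P + ?Q) = tr n (?R + y * L a)"
      using polar[of y a] by (simp add: tr_add algebra_simps char2)
    hence PQ: "sgn2 (tr n ?P) * sgn2 (tr n ?Q) = sgn2 (tr n ?R) * sgn2 (tr n (y * L a))"
      unfolding sgn2_tr_add[symmetric] by (rule arg_cong[where f=sgn2])
    have L_twist: "sgn2 (tr n (y * L a)) * sgn2 (tr n (c * a * y)) = sgn2 (tr n ((L a + c * a) * y))"
      by (simp add: sgn2_tr_add[symmetric] algebra_simps)
    have "A (y + a) * cnj (A y) = (sgn2 (tr n ?P) * sgn2 (tr n ?Q)) * (\<psi> (y + a) * cnj (\<psi> y))"
      unfolding A_def by (simp add: mult_ac)
    also have "\<dots> = \<psi> a * sgn2 (tr n ?R) * (sgn2 (tr n (y * L a)) * sgn2 (tr n (c * a * y)))"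
      unfolding PQ twist by (simp add: mult_ac)
    finally show ?thesis unfolding L_twist .
  qed
  have "walsh n \<psi> (\<lambda>x. tr n (q x)) \<mu> = (\<Sum>x\<in>UNIV. A x)"
    unfolding walsh_def A_def by (simp add: tr_add)
  hence "walsh n \<psi> (\<lambda>x. tr n (q x)) \<mu> * cnj (walsh n \<psi> (\<lambda>x. tr n (q x)) \<mu>)
       = (\<Sum>x\<in>UNIV. \<Sum>y\<in>UNIV. A x * cnj (A y))"
    by (simp add: sum_product)
  also have "\<dots> = (\<Sum>y\<in>UNIV. \<Sum>x\<in>UNIV. A x * cnj (A y))"
    by (rule sum.swap)
  also have "\<dots> = (\<Sum>y\<in>UNIV. \<Sum>a\<in>UNIV. A (y + a) * cnj (A y))"
  proof (rule sum.cong[OF refl])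
    fix y
    show "(\<Sum>x\<in>UNIV. A x * cnj (A y)) = (\<Sum>a\<in>UNIV. A (y + a) * cnj (A y))"
      using sum_shift[of "\<lambda>x. A x * cnj (A y)" y] by (simp add: add.commute)
  qed
  also have "\<dots> = (\<Sum>a\<in>UNIV. \<Sum>y\<in>UNIV. \<psi> a * sgn2 (tr n (q a + \<mu> * a)) * sgn2 (tr n ((L a + c * a) * y)))"
    unfolding pair by (rule sum.swap)
  also have "\<dots> = (\<Sum>a\<in>UNIV. if L a + c * a = 0 then 2 ^ n * (\<psi> a * sgn2 (tr n (q a + \<mu> * a))) else 0)"
    by (intro sum.cong refl) (simp add: sum_distrib_left[symmetric] sum_sgn2_tr_mult[OF tr_z])
  also have "\<dots> = 2 ^ n * (\<Sum>a | L a + c * a = 0. \<psi> a * sgn2 (tr n (q a + \<mu> * a)))"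
    by (simp add: sum.If_cases sum_distrib_left)
  finally show ?thesis .
qed

text \<open>If the kernel K of L + c contains some b \<noteq> 0, the Fourier coefficient at
  b of \<mu> \<mapsto> \<Sum>a\<in>K. \<psi> a (-1)^tr(q a + \<mu> a) does not vanish, so this sum is not
  constantly 1.\<close>

lemma walsh_flat_iff:
  "(\<forall>\<mu>. cmod (walsh n \<psi> (\<lambda>x. tr n (q x)) \<mu>) = sqrt (2 ^ n)) \<longleftrightarrow> (\<forall>a. L a + c * a = 0 \<longrightarrow> a = 0)"
proof -
  define K where "K = {a. L a + c * a = 0}"
  define R where "R a = \<psi> a * sgn2 (tr n (q a))" for a
  define T where "T \<mu> = (\<Sum>a\<in>K. R a * sgn2 (tr n (\<mu> * a)))" for \<mu>
  have T: "(\<Sum>a\<in>K. \<psi> a * sgn2 (tr n (q a + \<mu> * a))) = T \<mu>" for \<mu>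
    unfolding T_def R_def by (simp add: sgn2_tr_add mult_ac)
  have "(\<forall>\<mu>. cmod (walsh n \<psi> (\<lambda>x. tr n (q x)) \<mu>) = sqrt (2 ^ n)) \<longleftrightarrow> (\<forall>\<mu>. T \<mu> = 1)"
    by (simp add: cmod_eq_sqrt_iff walsh_mult_cnj K_def[symmetric] T)
  also have "\<dots> \<longleftrightarrow> (\<forall>a. L a + c * a = 0 \<longrightarrow> a = 0)"
  proof
    assume T1: "\<forall>\<mu>. T \<mu> = 1"
    show "\<forall>a. L a + c * a = 0 \<longrightarrow> a = 0"
    proof (rule ccontr)
      assume "\<not> (\<forall>a. L a + c * a = 0 \<longrightarrow> a = 0)"
      then obtain b where b: "b \<in> K" "b \<noteq> 0" unfolding K_def by auto
      have "(\<Sum>\<mu>\<in>UNIV. T \<mu> * sgn2 (tr n (b * \<mu>)))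
          = (\<Sum>\<mu>\<in>UNIV. \<Sum>a\<in>K. R a * sgn2 (tr n ((a + b) * \<mu>)))"
      proof -
        have "sgn2 (tr n ((a + b) * \<mu>)) = sgn2 (tr n (\<mu> * a)) * sgn2 (tr n (b * \<mu>))" for a \<mu>
          by (simp add: distrib_right mult.commute[of a] sgn2_tr_add)
        thus ?thesis
          unfolding T_def sum_distrib_right by (simp add: mult.assoc)
      qed
      also have "\<dots> = (\<Sum>a\<in>K. R a * (\<Sum>\<mu>\<in>UNIV. sgn2 (tr n ((a + b) * \<mu>))))"
        by (subst sum.swap) (simp add: sum_distrib_left)
      also have "\<dots> = (\<Sum>a\<in>K. if a = b then R a * 2 ^ n else 0)"
        by (intro sum.cong refl) (simp add: sum_sgn2_tr_mult[OF tr_z] add_eq_0_iff_eq)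
      also have "\<dots> = R b * 2 ^ n"
        using b by simp
      finally have "R b * 2 ^ n = (\<Sum>\<mu>\<in>UNIV. T \<mu> * sgn2 (tr n (b * \<mu>)))" ..
      also have "\<dots> = 0"
        using T1 sum_sgn2_tr_mult[OF tr_z, of b] b by simp
      finally show False
        unfolding R_def using \<psi>_nonzero by simp
    qed
  next
    assume "\<forall>a. L a + c * a = 0 \<longrightarrow> a = 0"
    moreover have "L 0 + c * 0 = 0" using L_0 by simp
    ultimately have "K = {0}" unfolding K_def by blast
    moreover have "tr n (q 0) = 0"
      using polar[of 0 0] by simp
    ultimately show "\<forall>\<mu>. T \<mu> = 1" unfolding T_def R_def by (simp add: \<psi>_0 sgn2_def)
  qed
  finally show ?thesis .
qed

end

section \<open>The quadratic form Tr(lam x^(2^k+1))\<close>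

lemma polar_add: "polar n k lam (x + y) = polar n k lam x + polar n k lam (y::'a)"
  by (simp add: polar_def frobenius_add algebra_simps)

lemma polar_0: "polar n k lam (0::'a) = 0"
  by (simp add: polar_def power_0_left)

lemma tr_quadratic_polar:
  "tr n (lam * (y + a) ^ (2 ^ k + 1)) + tr n (lam * y ^ (2 ^ k + 1))
   = tr n (lam * a ^ (2 ^ k + 1)) + tr n (y * polar n k lam (a::'a))"
proof -
  let ?q = "2 ^ k :: nat" and ?e = "2 ^ (n - k mod n) :: nat"
  have "tr n (lam * a * y ^ ?q) = tr n (((lam * a) ^ ?e * y) ^ ?q)"
    by (simp add: power_mult_distrib frobenius_inverse)
  hence "tr n (lam * a * y ^ ?q) = tr n ((lam * a) ^ ?e * y)"
    by simp
  moreover have "y * polar n k lam a = (lam * a) ^ ?e * y + lam * a ^ ?q * y"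
    by (simp add: polar_def power_mult_distrib algebra_simps)
  moreover have "lam * (y + a) ^ (?q + 1) + lam * y ^ (?q + 1)
      = lam * a ^ (?q + 1) + lam * a * y ^ ?q + lam * a ^ ?q * y"
    by (simp add: frobenius_add algebra_simps)
  hence "tr n (lam * (y + a) ^ (?q + 1)) + tr n (lam * y ^ (?q + 1))
      = tr n (lam * a ^ (?q + 1)) + tr n (lam * a * y ^ ?q) + tr n (lam * a ^ ?q * y)"
    unfolding tr_add[symmetric] by (rule arg_cong)
  ultimately show ?thesis
    by (simp only: tr_add add.assoc)
qed

lemma bent_iff_polar_injective:
  assumes "self_dual_basis n (\<alpha> :: nat \<Rightarrow> 'a)"
  shows "bent n (\<lambda>x::'a. tr n (lam * x ^ (2 ^ k + 1))) \<longleftrightarrow> (\<forall>a. polar n k lam a = 0 \<longrightarrow> a = 0)"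
  unfolding bent_iff_walsh
  using walsh_flat_iff[of "\<lambda>x. lam * x ^ (2 ^ k + 1)" "polar n k lam" "\<lambda>_. 1" 0,
      OF tr_quadratic_polar polar_0 _ _ _ self_dual_tr_nonzero[OF assms]]
  by (simp add: sgn2_def)

lemma negabent_iff_polar_plus_id_injective:
  assumes sd: "self_dual_basis n \<alpha>"
  shows "negabent n \<alpha> (\<lambda>x::'a. tr n (lam * x ^ (2 ^ k + 1))) \<longleftrightarrow> (\<forall>a. polar n k lam a + a = 0 \<longrightarrow> a = 0)"
proof -
  have "\<i> ^ wt n \<alpha> (y + a) * cnj (\<i> ^ wt n \<alpha> y) = \<i> ^ wt n \<alpha> a * sgn2 (tr n (1 * a * y))" for y a
    using i_pow_wt_add[OF sd] by simp
  then show ?thesis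
    unfolding negabent_iff_walsh
    using walsh_flat_iff[of "\<lambda>x. lam * x ^ (2 ^ k + 1)" "polar n k lam" "\<lambda>x. \<i> ^ wt n \<alpha> x" 1,
        OF tr_quadratic_polar polar_0 _ _ _ self_dual_tr_nonzero[OF sd]]
    by (simp add: wt_def)
qed

lemma complete_mapping_polar_iff:
  "complete_mapping (polar n k lam) \<longleftrightarrow>
   (\<forall>a. polar n k lam a = (0::'a) \<longrightarrow> a = 0) \<and> (\<forall>a. polar n k lam a + a = (0::'a) \<longrightarrow> a = 0)"
proof -
  have "bij G \<longleftrightarrow> (\<forall>a. G a = 0 \<longrightarrow> a = 0)" if "\<And>x y. G (x + y) = G x + G y" for G :: "'a \<Rightarrow> 'a"
    using inj_additive_iff[OF that] finite_UNIV_inj_surj[of G] by (auto simp: bij_def)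
  thus ?thesis
    unfolding complete_mapping_def by (simp add: polar_add algebra_simps)
qed

section \<open>Kernels of polar and of polar + id\<close>

lemma frobenius_polar_mult:
  "(polar n k lam x) ^ (2 ^ k) * (x::'a) ^ (2 ^ k)
   = lam * x ^ (2 ^ k + 1) + (lam * x ^ (2 ^ k + 1)) ^ (2 ^ k)"
proof -
  let ?q = "2 ^ k :: nat" and ?e = "2 ^ (n - k mod n) :: nat"
  have "(polar n k lam x) ^ ?q = (lam ^ ?e) ^ ?q * (x ^ ?e) ^ ?q + lam ^ ?q * (x ^ ?q) ^ ?q"
    by (simp only: polar_def frobenius_add power_mult_distrib)
  also have "\<dots> = lam * x + lam ^ ?q * (x ^ ?q) ^ ?q"
    by (simp only: frobenius_inverse)
  finally show ?thesis
    by (simp add: algebra_simps power_mult_distrib)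
qed

lemma square_eq_iff: "(x::'a) ^ 2 = y ^ 2 \<longleftrightarrow> x = y"
  using frobenius_eq_iff[of x 1 y] by simp

lemma polar_kernel_nontrivial_iff:
  "(\<exists>x::'a. x \<noteq> 0 \<and> polar n k lam x = 0) \<longleftrightarrow> (\<exists>v. lam = v ^ (2 ^ k + 1))"
proof
  assume "\<exists>x. x \<noteq> 0 \<and> polar n k lam x = 0"
  then obtain x where x: "x \<noteq> 0" "polar n k lam x = 0" by blast
  define u where "u = lam * x ^ (2 ^ k + 1)"
  have "u + u ^ (2 ^ k) = 0"
    using frobenius_polar_mult[of k lam x] x(2) by (simp add: u_def power_0_left)
  hence u: "u ^ (2 ^ k) = u"
    unfolding add_eq_0_iff_eq by (rule sym)
  obtain t where t: "t ^ 2 = u"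
    using frobenius_root_exists[of 1 u] by auto
  have "(t ^ (2 ^ k)) ^ 2 = (t ^ 2) ^ (2 ^ k)"
    by (simp add: power_mult[symmetric] mult.commute)
  hence "(t ^ (2 ^ k)) ^ 2 = t ^ 2"
    using t u by simp
  hence "t ^ (2 ^ k) = t"
    by (simp only: square_eq_iff)
  hence "t ^ (2 ^ k + 1) = u"
    using t by (simp add: power2_eq_square)
  hence "lam = (t / x) ^ (2 ^ k + 1)"
    using x by (simp add: u_def power_divide)
  thus "\<exists>v. lam = v ^ (2 ^ k + 1)" ..
next
  assume "\<exists>v. lam = v ^ (2 ^ k + 1)"
  then obtain v where v: "lam = v ^ (2 ^ k + 1)" ..
  show "\<exists>x. x \<noteq> 0 \<and> polar n k lam x = 0"
  proof (cases "v = 0")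
    case True
    thus ?thesis using v by (intro exI[of _ 1]) (simp add: polar_def power_0_left)
  next
    case False
    have "lam * (1 / v) ^ (2 ^ k + 1) = 1"
      using False v by (simp add: power_divide)
    hence "(polar n k lam (1 / v)) ^ (2 ^ k) * (1 / v) ^ (2 ^ k) = 0"
      by (simp only: frobenius_polar_mult power_one add_self_eq_0)
    thus ?thesis using False by (intro exI[of _ "1 / v"]) simp
  qed
qed

text \<open>The excluded values v0 ^ (2^(2k)+1) / (v0 + v0^(2^k)) ^ (2^k+1) are, for
  w = 1 / v0, exactly w ^ (2^(k+1)) / x ^ (2^k+1) with x = w + w^(2^k).\<close>

lemma excluded_value_inverse:
  assumes "(w::'a) \<noteq> 0"
  shows "(1 / w) ^ (2 ^ (2 * k) + 1) / (1 / w + (1 / w) ^ (2 ^ k)) ^ (2 ^ k + 1)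
       = w ^ (2 ^ Suc k) / (w + w ^ (2 ^ k)) ^ (2 ^ k + 1)"
proof -
  let ?q = "2 ^ k :: nat"
  define A X C where "A = w ^ (?q * ?q + 1)" and "X = (w + w ^ ?q) ^ (?q + 1)" and "C = w ^ (2 ^ Suc k)"
  have "(2::nat) ^ (2 * k) = ?q * ?q"
    by (simp add: mult_2 power_add)
  hence "(1 / w) ^ (2 ^ (2 * k) + 1) = 1 / A"
    unfolding A_def by (simp only: power_one_over)
  moreover have "(1 / w + (1 / w) ^ ?q) ^ (?q + 1) = X / (A * C)"
  proof -
    have "1 / w + (1 / w) ^ ?q = (w + w ^ ?q) / w ^ (?q + 1)"
      using assms by (simp add: field_simps power_add)
    moreover have "(w ^ (?q + 1)) ^ (?q + 1) = A * C"
    proof -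
      have "(?q + 1) * (?q + 1) = (?q * ?q + 1) + 2 ^ Suc k"
        by (simp add: algebra_simps)
      hence "(w ^ (?q + 1)) ^ (?q + 1) = w ^ ((?q * ?q + 1) + 2 ^ Suc k)"
        by (simp only: power_mult[symmetric])
      thus ?thesis
        unfolding A_def C_def by (simp only: power_add)
    qed
    ultimately show ?thesis
      unfolding X_def by (simp only: power_divide)
  qed
  moreover have "A \<noteq> 0" using assms by (simp add: A_def)
  ultimately show ?thesis
    unfolding C_def[symmetric] X_def[symmetric] by (cases "X = 0") (simp_all add: field_simps)
qed

lemma polar_plus_id_kernel_nontrivial_iff:
  assumes "k \<noteq> 0"
  shows "(\<exists>x::'a. x \<noteq> 0 \<and> polar n k lam x + x = 0) \<longleftrightarrow>
         (\<exists>v0. v0 ^ (2 ^ gcd k n) \<noteq> v0 \<and> lam = v0 ^ (2 ^ (2 * k) + 1) / (v0 + v0 ^ (2 ^ k)) ^ (2 ^ k + 1))"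
    (is "?kernel \<longleftrightarrow> ?excluded")
proof -
  let ?q = "2 ^ k :: nat"
  let ?param = "\<exists>w. w ^ ?q \<noteq> w \<and> lam = w ^ (2 ^ Suc k) / (w + w ^ ?q) ^ (?q + 1)"
  have frob_id: "(polar n k lam x + x) ^ ?q * x ^ ?q
      = (lam * x ^ (?q + 1) + (lam * x ^ (?q + 1)) ^ ?q) + x ^ (2 ^ Suc k)" for x
  proof -
    have "(polar n k lam x + x) ^ ?q * x ^ ?q = polar n k lam x ^ ?q * x ^ ?q + x ^ ?q * x ^ ?q"
      by (simp add: frobenius_add distrib_right)
    also have "x ^ ?q * x ^ ?q = x ^ (2 ^ Suc k)"
      by (simp add: power_add[symmetric] mult_2)
    finally show ?thesis unfolding frobenius_polar_mult .
  qed
  have frob_swap: "((w::'a) ^ ?q) ^ (2 ^ Suc k) = (w ^ (2 ^ Suc k)) ^ ?q" for w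
    by (simp add: power_mult[symmetric] mult.commute)
  have inverse_fixed_iff: "(1 / w) ^ m = 1 / w \<longleftrightarrow> w ^ m = w" for w :: 'a and m
    by (simp add: power_one_over)
  have fixed_iff: "w ^ ?q = w \<longleftrightarrow> (1 / w) ^ (2 ^ gcd k n) = 1 / w" for w :: 'a
    unfolding inverse_fixed_iff
    using frobenius_fixed_gcd[OF assms, of w] frobenius_fixed_dvd[OF gcd_dvd1[of k n], of w] by blast
  text \<open>The kernel is parametrised by x = w + w ^ 2^k, lam = w ^ 2^(k+1) / x ^ (2^k+1).\<close>
  have "?kernel \<longleftrightarrow> ?param"
  proof
    assume ?kernel
    then obtain x where x: "x \<noteq> 0" "polar n k lam x + x = 0" by blast
    define u where "u = lam * x ^ (?q + 1)"
    obtain w where w: "w ^ (2 ^ Suc k) = u" using frobenius_root_exists by blast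
    have "(u + u ^ ?q) + x ^ (2 ^ Suc k) = 0"
      using frob_id[of x] x(2) by (simp add: u_def power_0_left)
    hence "u + u ^ ?q = x ^ (2 ^ Suc k)"
      by (simp only: add_eq_0_iff_eq)
    moreover have "(w + w ^ ?q) ^ (2 ^ Suc k) = u + u ^ ?q"
      by (simp only: frobenius_add frob_swap w)
    ultimately have "(w + w ^ ?q) ^ (2 ^ Suc k) = x ^ (2 ^ Suc k)" by (simp only:)
    hence xw: "x = w + w ^ ?q" by (simp only: frobenius_eq_iff eq_commute)
    have "lam = u / x ^ (?q + 1)"
      using x(1) by (simp add: u_def)
    hence "lam = w ^ (2 ^ Suc k) / (w + w ^ ?q) ^ (?q + 1)"
      by (simp only: w xw)
    moreover have "w ^ ?q \<noteq> w"
    proof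
      assume "w ^ ?q = w"
      with xw x(1) show False by simp
    qed
    ultimately show ?param by blast
  next
    assume ?param
    then obtain w where w: "w ^ ?q \<noteq> w" and lam: "lam = w ^ (2 ^ Suc k) / (w + w ^ ?q) ^ (?q + 1)"
      by blast
    define x where "x = w + w ^ ?q"
    have x0: "x \<noteq> 0"
    proof
      assume "x = 0"
      hence "w = w ^ ?q" unfolding x_def add_eq_0_iff_eq .
      with w show False by simp
    qed
    have "lam * x ^ (?q + 1) = w ^ (2 ^ Suc k)"
      using x0 by (simp add: lam x_def)
    moreover have "x ^ (2 ^ Suc k) = w ^ (2 ^ Suc k) + (w ^ (2 ^ Suc k)) ^ ?q"
      by (simp only: x_def frobenius_add frob_swap)
    ultimately have "(polar n k lam x + x) ^ ?q * x ^ ?q = 0"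
      unfolding frob_id by (simp only: add_self_eq_0)
    thus ?kernel using x0 by auto
  qed
  also have "\<dots> \<longleftrightarrow> ?excluded"
  proof
    assume ?param
    then obtain w where w: "w ^ ?q \<noteq> w" and lam: "lam = w ^ (2 ^ Suc k) / (w + w ^ ?q) ^ (?q + 1)"
      by blast
    hence "w \<noteq> 0" by (auto simp: power_0_left)
    have "(1 / w) ^ (2 ^ gcd k n) \<noteq> 1 / w" using w fixed_iff by blast
    moreover have "lam = (1 / w) ^ (2 ^ (2 * k) + 1) / (1 / w + (1 / w) ^ ?q) ^ (?q + 1)"
      using excluded_value_inverse[OF \<open>w \<noteq> 0\<close>] lam by simp
    ultimately show ?excluded by blast
  next
    assume ?excluded
    then obtain v0 where v0: "v0 ^ (2 ^ gcd k n) \<noteq> v0"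
      and lam: "lam = v0 ^ (2 ^ (2 * k) + 1) / (v0 + v0 ^ ?q) ^ (?q + 1)" by blast
    hence "v0 \<noteq> 0" by (auto simp: power_0_left)
    define w where "w = 1 / v0"
    have vw: "v0 = 1 / w" and "w \<noteq> 0"
      using \<open>v0 \<noteq> 0\<close> by (simp_all add: w_def)
    have "w ^ ?q \<noteq> w" using fixed_iff[of w] v0 unfolding vw by blast
    moreover have "lam = w ^ (2 ^ Suc k) / (w + w ^ ?q) ^ (?q + 1)"
      using lam excluded_value_inverse[OF \<open>w \<noteq> 0\<close>] unfolding vw by simp
    ultimately show ?param by blast
  qed
  finally show ?thesis .
qed

end

theorem theorem3:
  fixes lam :: "'a::{field,finite}" and n k d :: nat and \<alpha> :: "nat \<Rightarrow> 'a"
  assumes card: "card (UNIV :: 'a set) = 2 ^ n"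
    and char2: "(2::'a) = 0"
    and even: "even n"
    and k: "k \<ge> 1"
    and d: "d = gcd k n"
    and sd: "self_dual_basis n \<alpha>"
  shows "(bent_negabent n \<alpha> (\<lambda>x. tr n (lam * x ^ (2 ^ k + 1)))
           \<longleftrightarrow> complete_mapping
                 (\<lambda>x. lam ^ (2 ^ (n - k mod n)) * x ^ (2 ^ (n - k mod n)) + lam * x ^ (2 ^ k)))
       \<and> (complete_mapping
                 (\<lambda>x. lam ^ (2 ^ (n - k mod n)) * x ^ (2 ^ (n - k mod n)) + lam * x ^ (2 ^ k))
           \<longleftrightarrow> ((\<nexists>v0. v0 ^ (2 ^ d) \<noteq> v0 \<and>
                     lam = v0 ^ (2 ^ (2 * k) + 1) / (v0 + v0 ^ (2 ^ k)) ^ (2 ^ k + 1))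
               \<and> (\<nexists>v. lam = v ^ (2 ^ k + 1))))"
proof -
  have L: "(\<lambda>x. lam ^ (2 ^ (n - k mod n)) * x ^ (2 ^ (n - k mod n)) + lam * x ^ (2 ^ k)) = polar n k lam"
    by (simp add: polar_def fun_eq_iff)
  show ?thesis
    unfolding L bent_negabent_def d
      complete_mapping_polar_iff[OF card char2]
      bent_iff_polar_injective[OF card char2 sd]
      negabent_iff_polar_plus_id_injective[OF card char2 sd]
    using polar_kernel_nontrivial_iff[OF card char2, of k lam]
      polar_plus_id_kernel_nontrivial_iff[OF card char2, of k lam] k
    by auto
qed

end
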